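(* For every $t_1,\dots,t_k\in S$ and $a_i\in\Gamma(t_i)$: (a) $p^{t_1,\dots,t_k}_{a_1,\dots,a_k}\mathcal H_\pi\subset\mathcal H_\pi$ and $p^{t_1,\dots,t_k}_{a_1,\dots,a_k}\mathcal H_\pi^\perp\subset\mathcal H_\pi^\perp$; (b) $p^{t_1,\dots,t_k}_{a_1,\dots,a_k}$ commutes with $p_\pi$; (c) the restriction of $p^{t_1,\dots,t_k}_{a_1,\dots,a_k}$ to $\mathcal H_\pi$ is the projection in $\mathcal H_\pi$ onto the subspace $\mathcal H^{t_1,\dots,t_k}_{a_1,\dots,a_k}\cap\mathcal H_\pi$; (d) for every $\phi\in\mathcal H_\pi$, $p^{t_1,\dots,t_k}_{a_1,\dots,a_k}\phi=p^{t_1}_{a_1}\cdots p^{t_k}_{a_k}\phi$; (e) for every $\phi\in\mathcal H_\pi$ and every $i\in\{1,\dots,k\}$, $$\sum_{a_i\in\Gamma(t_i)}p^{t_1,\dots,t_{i-1},t_i,t_{i+1},\dots,t_k}_{a_1,\dots,a_{i-1},a_i,a_{i+1},\dots,a_k}\phi=p^{t_1,\dots,t_{i-1},t_{i+1},\dots,t_k}_{a_1,\dots,a_{i-1},a_{i+1},\dots,a_k}\phi .$$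
   Context: Let $\mathcal H$ be a complex Hilbert space. A projection is a bounded self-adjoint idempotent operator; $\wedge_\alpha p_\alpha$ is the projection onto the intersection of ranges of the $p_\alpha$. Sums of countably many operators are understood strongly. Let $S$ be a set; for each $t\in S$ let $\Gamma(t)$ be a countable set and for $a\in\Gamma(t)$ let $p^t_a$ be a projection on $\mathcal H$ with range $\mathcal H^t_a$ and $\sum_{a\in\Gamma(t)}p^t_a=I$. Let $\pi=\{p^t_a\}$, $\mathcal H^{t_1,\dots,t_k}_{a_1,\dots,a_k}=\bigcap_i\mathcal H^{t_i}_{a_i}$ and $p^{t_1,\dots,t_k}_{a_1,\dots,a_k}=\wedge_{i=1}^kp^{t_i}_{a_i}$ its projection. $\pi$ commutes on $\phi$ if $W\phi=V\phi$ whenever $W,V$ are finite products of elements of $\pi$ with the same factors (with multiplicity) in possibly different orders; $\mathcal H_\pi$ is the closed subspace of such $\phi$ and $p_\pi$ the projection onto it. *)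

theory Defs
  imports "HOL-Analysis.Analysis"
begin

text \<open>A complex inner product space, encoded as a real inner product space
(whose real inner product is the real part of the complex one) together with a
complex scalar multiplication compatible with the real one and with the norm.
A complex Hilbert space is an instance of this class that is also complete.\<close>

class complex_inner = real_inner +
  fixes scaleC :: "complex \<Rightarrow> 'a \<Rightarrow> 'a"
  assumes scaleC_add_right: "scaleC c (x + y) = scaleC c x + scaleC c y"
    and scaleC_add_left: "scaleC (c + d) x = scaleC c x + scaleC d x"
    and scaleC_scaleC: "scaleC c (scaleC d x) = scaleC (c * d) x"
    and scaleC_of_real: "scaleC (of_real r) x = scaleR r x"
    and norm_scaleC: "norm (scaleC c x) = cmod c * norm x"

instantiation complex :: complex_inner
begin
definition scaleC_complex :: "complex \<Rightarrow> complex \<Rightarrow> complex" where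
  "scaleC_complex c x = c * x"
instance
  by standard (auto simp: scaleC_complex_def algebra_simps norm_mult scaleR_conv_of_real)
end

text \<open>The complex inner product (conjugate-linear in the first argument);
its real part is the real inner product.\<close>
definition cinner :: "'a::complex_inner \<Rightarrow> 'a \<Rightarrow> complex" where
  "cinner x y = Complex (inner x y) (inner (scaleC \<i> x) y)"

definition is_projection :: "('a::complex_inner \<Rightarrow> 'a) \<Rightarrow> bool" where
  "is_projection P \<longleftrightarrow> bounded_linear P \<and> (\<forall>c x. P (scaleC c x) = scaleC c (P x))
     \<and> (\<forall>x y. cinner (P x) y = cinner x (P y)) \<and> P \<circ> P = P"

definition orthoproj :: "'a::complex_inner set \<Rightarrow> 'a \<Rightarrow> 'a" where
  "orthoproj M x = (THE y. y \<in> M \<and> (\<forall>z\<in>M. cinner z (x - y) = 0))"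

definition orth_compl :: "'a::complex_inner set \<Rightarrow> 'a set" where
  "orth_compl M = {x. \<forall>y\<in>M. cinner y x = 0}"

definition pi_family :: "'t set \<Rightarrow> ('t \<Rightarrow> 'b set) \<Rightarrow> ('t \<Rightarrow> 'b \<Rightarrow> 'h \<Rightarrow> 'h) \<Rightarrow> ('h \<Rightarrow> 'h) set" where
  "pi_family S \<Gamma> p = {p t a | t a. t \<in> S \<and> a \<in> \<Gamma> t}"

definition op_prod :: "('h \<Rightarrow> 'h) list \<Rightarrow> 'h \<Rightarrow> 'h" where
  "op_prod Ws = foldr (\<circ>) Ws id"

definition commutes_on :: "('h \<Rightarrow> 'h) set \<Rightarrow> 'h \<Rightarrow> bool" where
  "commutes_on PI \<phi> \<longleftrightarrow> (\<forall>Ws Vs. set Ws \<subseteq> PI \<and> set Vs \<subseteq> PI \<and> mset Ws = mset Vs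
       \<longrightarrow> op_prod Ws \<phi> = op_prod Vs \<phi>)"

definition H_pi :: "('h \<Rightarrow> 'h) set \<Rightarrow> 'h set" where
  "H_pi PI = {\<phi>. commutes_on PI \<phi>}"

text \<open>p^{t_1..t_k}_{a_1..a_k} for indices in a set I of positions:
projection onto the intersection of the ranges (identity if I is empty).\<close>
definition meet_proj :: "('t \<Rightarrow> 'b \<Rightarrow> 'h::complex_inner \<Rightarrow> 'h) \<Rightarrow> (nat \<Rightarrow> 't) \<Rightarrow> (nat \<Rightarrow> 'b) \<Rightarrow> nat set \<Rightarrow> 'h \<Rightarrow> 'h" where
  "meet_proj p t a I = orthoproj (\<Inter>i\<in>I. range (p (t i) (a i)))"

end

theory Submission
  imports Defs
begin

(* On H_pi every product of operators from pi may be reordered. Hence for phi in H_pi the product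
   p^{t_1}_{a_1} ... p^{t_k}_{a_k} phi lies in every range H^{t_i}_{a_i} (bring p^{t_i}_{a_i} to
   the front and use idempotence), and phi minus it is orthogonal to the intersection of these
   ranges (the adjoint of the product is the reversed product, which fixes that intersection).
   So it is p^{t_1..t_k} phi, which is (d). As products of elements of pi map H_pi into itself,
   (d) makes H_pi invariant under the self-adjoint p^{t_1..t_k}, and (a), (b), (c) follow.
   For (e), list t_i last: the sum over a_i is the resolution of the identity for t_i pushed
   through the bounded product of the remaining factors. Orthogonal projections onto closed
   subspaces exist by the usual minimisation argument in the complete space. *)

lemma norm_midpoint_parallelogram:
  fixes x u v :: "'a::real_inner"
  shows "norm (u - v)^2 + 4 * norm (x - (1/2) *\<^sub>R (u + v))^2
    = 2 * norm (x - u)^2 + 2 * norm (x - v)^2"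
  by (simp add: power2_norm_eq_inner inner_add_left inner_add_right inner_diff_left
      inner_diff_right inner_commute algebra_simps)

lemma minimizing_sequence_Cauchy:
  fixes f :: "nat \<Rightarrow> 'a::real_inner"
  assumes "convex C" and f: "\<And>n. f n \<in> C"
    and d: "\<And>m. m \<in> C \<Longrightarrow> d \<le> norm (x - m)^2"
    and fd: "\<And>n. norm (x - f n)^2 \<le> d + e n" and e: "e \<longlonglongrightarrow> 0"
  shows "Cauchy f"
proof (rule CauchyI)
  have bound: "norm (f m - f n)^2 \<le> 2 * e m + 2 * e n" for m n
  proof -
    have "(1/2) *\<^sub>R (f m + f n) \<in> C"
      using convexD[OF \<open>convex C\<close> f f, of "1/2" "1/2"] by (simp add: scaleR_right_distrib)
    then show ?thesis
      using norm_midpoint_parallelogram[of "f m" "f n" x] d fd[of m] fd[of n] by fastforce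
  qed
  fix \<epsilon> :: real assume "\<epsilon> > 0"
  then obtain N where N: "\<And>n. n \<ge> N \<Longrightarrow> norm (e n) < \<epsilon>^2 / 4"
    using LIMSEQ_D[OF e, of "\<epsilon>^2 / 4"] by auto
  have "norm (f m - f n) < \<epsilon>" if "m \<ge> N" "n \<ge> N" for m n
  proof (rule power2_less_imp_less)
    show "norm (f m - f n)^2 < \<epsilon>^2"
      using bound[of m n] N[OF \<open>m \<ge> N\<close>] N[OF \<open>n \<ge> N\<close>] by auto
  qed (use \<open>\<epsilon> > 0\<close> in simp)
  then show "\<exists>N. \<forall>m\<ge>N. \<forall>n\<ge>N. norm (f m - f n) < \<epsilon>" by blast
qed

lemma closed_convex_nearest_point_exists:
  fixes C :: "'a::{real_inner, complete_space} set"
  assumes "closed C" "convex C" "C \<noteq> {}"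
  shows "\<exists>y\<in>C. \<forall>m\<in>C. norm (x - y) \<le> norm (x - m)"
proof -
  define d where "d = (INF m\<in>C. norm (x - m)^2)"
  have bdd: "bdd_below ((\<lambda>m. norm (x - m)^2) ` C)"
    by (rule bdd_belowI[of _ 0]) auto
  have d_le: "d \<le> norm (x - m)^2" if "m \<in> C" for m
    unfolding d_def using bdd that by (rule cINF_lower)
  have below: "\<exists>m\<in>C. norm (x - m)^2 < r" if "d < r" for r
    using that cINF_less_iff[OF \<open>C \<noteq> {}\<close> bdd] unfolding d_def by blast
  have "\<exists>m\<in>C. norm (x - m)^2 < d + inverse (Suc n)" for n
    by (rule below) simp
  then obtain f where f: "\<And>n. f n \<in> C" and fd: "\<And>n. norm (x - f n)^2 < d + inverse (Suc n)"
    by metis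
  have "Cauchy f"
    using \<open>convex C\<close> f d_le less_imp_le[OF fd] LIMSEQ_inverse_real_of_nat
    by (rule minimizing_sequence_Cauchy)
  then obtain y where y: "f \<longlonglongrightarrow> y" using Cauchy_convergent_iff convergent_def by blast
  have "y \<in> C" using closed_sequentially[OF \<open>closed C\<close> f y] .
  have "norm (x - y)^2 \<le> d"
  proof (rule LIMSEQ_le)
    show "(\<lambda>n. norm (x - f n)^2) \<longlonglongrightarrow> norm (x - y)^2" by (intro tendsto_intros y)
    show "(\<lambda>n. d + inverse (Suc n)) \<longlonglongrightarrow> d"
      using tendsto_add[OF tendsto_const LIMSEQ_inverse_real_of_nat] by simp
  qed (use fd less_imp_le in blast)
  then have "norm (x - y) \<le> norm (x - m)" if "m \<in> C" for m
    using d_le[OF that] by (simp add: power2_le_imp_le)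
  with \<open>y \<in> C\<close> show ?thesis by blast
qed

lemma nearest_point_subspace_orthogonal:
  fixes M :: "'a::real_inner set"
  assumes "subspace M" "y \<in> M" "z \<in> M"
    and nearest: "\<And>m. m \<in> M \<Longrightarrow> norm (x - y) \<le> norm (x - m)"
  shows "inner z (x - y) = 0"
proof (cases "z = 0")
  case False
  define c where "c = inner z (x - y)"
  define s where "s = c / inner z z"
  have "inner z z > 0" using False by simp
  have "y + s *\<^sub>R z \<in> M" using assms by (simp add: subspace_add subspace_scale)
  then have "norm (x - y)^2 \<le> norm ((x - y) - s *\<^sub>R z)^2"
    using nearest by (simp add: diff_diff_eq)
  also have "\<dots> = norm (x - y)^2 - 2 * s * c + s^2 * inner z z"
    unfolding c_def power2_norm_eq_inner
    by (simp add: inner_commute power2_eq_square algebra_simps)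
  also have "\<dots> = norm (x - y)^2 - c^2 / inner z z"
    unfolding s_def using \<open>inner z z > 0\<close> by (simp add: field_simps power2_eq_square)
  finally have "c^2 / inner z z \<le> 0" by simp
  then show ?thesis
    using \<open>inner z z > 0\<close> unfolding c_def by (simp add: divide_le_0_iff)
qed simp

lemma closed_subspace_orthogonal_projection_exists:
  fixes M :: "'a::{real_inner, complete_space} set"
  assumes "closed M" "subspace M"
  shows "\<exists>y\<in>M. \<forall>z\<in>M. inner z (x - y) = 0"
  using closed_convex_nearest_point_exists[OF \<open>closed M\<close> subspace_imp_convex[OF \<open>subspace M\<close>]]
    nearest_point_subspace_orthogonal[OF \<open>subspace M\<close>] subspace_0[OF \<open>subspace M\<close>]
  by blast

definition closed_csubspace :: "'a::complex_inner set \<Rightarrow> bool" where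
  "closed_csubspace M \<longleftrightarrow> closed M \<and> subspace M \<and> (\<forall>c. \<forall>u\<in>M. scaleC c u \<in> M)"

lemma closed_csubspaceI:
  assumes "closed M" "0 \<in> M" "\<And>u v. u \<in> M \<Longrightarrow> v \<in> M \<Longrightarrow> u + v \<in> M"
    and "\<And>c u. u \<in> M \<Longrightarrow> scaleC c u \<in> M"
  shows "closed_csubspace M"
proof -
  have "scaleR r u \<in> M" if "u \<in> M" for r u
    using assms(4)[OF that, of "of_real r"] by (simp add: scaleC_of_real)
  then show ?thesis using assms by (simp add: closed_csubspace_def subspace_def)
qed

lemma closed_csubspace_INT:
  "(\<And>i. i \<in> I \<Longrightarrow> closed_csubspace (A i)) \<Longrightarrow> closed_csubspace (\<Inter>i\<in>I. A i)"
  unfolding closed_csubspace_def by (auto intro!: closed_INT subspace_Int)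

lemma cinner_eq_0_iff: "cinner z w = 0 \<longleftrightarrow> inner z w = 0 \<and> inner (scaleC \<i> z) w = 0"
  unfolding cinner_def by (simp add: complex_eq_iff)

lemma cinner_eq_0_if_real_orthogonal:
  assumes "closed_csubspace M" "\<And>u. u \<in> M \<Longrightarrow> inner u w = 0" "z \<in> M"
  shows "cinner z w = 0"
proof -
  have "scaleC \<i> z \<in> M" using assms(1,3) by (simp add: closed_csubspace_def)
  then show ?thesis using assms(2,3) by (simp add: cinner_eq_0_iff)
qed

lemma orthoproj_unique:
  assumes "subspace M" "y \<in> M" "\<And>z. z \<in> M \<Longrightarrow> cinner z (x - y) = 0"
  shows "orthoproj M x = y"
  unfolding orthoproj_def
proof (rule the_equality)
  fix y' assume y': "y' \<in> M \<and> (\<forall>z\<in>M. cinner z (x - y') = 0)"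
  have "y' - y \<in> M" using assms y' by (simp add: subspace_diff)
  then have "inner (y' - y) (x - y') = 0" "inner (y' - y) (x - y) = 0"
    using assms y' cinner_eq_0_iff by blast+
  then have "inner (y' - y) (y' - y) = 0" by (simp add: inner_diff_right)
  then show "y' = y" by simp
qed (use assms in blast)

lemma
  fixes M :: "'a::{complex_inner, complete_space} set"
  assumes "closed_csubspace M"
  shows orthoproj_in: "orthoproj M x \<in> M"
    and orthoproj_orthogonal: "z \<in> M \<Longrightarrow> cinner z (x - orthoproj M x) = 0"
proof -
  have "closed M" "subspace M" using assms by (simp_all add: closed_csubspace_def)
  then obtain y where y: "y \<in> M" "\<And>z. z \<in> M \<Longrightarrow> inner z (x - y) = 0"
    using closed_subspace_orthogonal_projection_exists by blast
  have y_orthogonal: "cinner z (x - y) = 0" if "z \<in> M" for z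
    using cinner_eq_0_if_real_orthogonal[OF assms y(2) that] .
  have "orthoproj M x = y"
    using orthoproj_unique[OF \<open>subspace M\<close> y(1) y_orthogonal] .
  with y(1) y_orthogonal show "orthoproj M x \<in> M" "z \<in> M \<Longrightarrow> cinner z (x - orthoproj M x) = 0"
    by simp_all
qed

lemma orthoproj_inner_commute:
  fixes M :: "'a::{complex_inner, complete_space} set"
  assumes "closed_csubspace M"
  shows "inner y (orthoproj M x) = inner (orthoproj M y) x"
proof -
  have "inner (orthoproj M x) (y - orthoproj M y) = 0" "inner (orthoproj M y) (x - orthoproj M x) = 0"
    using orthoproj_orthogonal[OF assms orthoproj_in[OF assms]] cinner_eq_0_iff by blast+
  then show ?thesis by (simp add: inner_diff_right inner_commute)
qed

lemma orthoproj_orth_compl_invariant: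
  fixes M H :: "'a::{complex_inner, complete_space} set"
  assumes M: "closed_csubspace M" and H: "closed_csubspace H"
    and invariant: "orthoproj M ` H \<subseteq> H"
  shows "orthoproj M ` orth_compl H \<subseteq> orth_compl H"
proof clarify
  fix x assume x: "x \<in> orth_compl H"
  have "inner z (orthoproj M x) = 0" if "z \<in> H" for z
  proof -
    have "orthoproj M z \<in> H" using invariant that by blast
    then have "inner (orthoproj M z) x = 0"
      using x unfolding orth_compl_def cinner_eq_0_iff by blast
    then show ?thesis by (simp add: orthoproj_inner_commute[OF M])
  qed
  then show "orthoproj M x \<in> orth_compl H"
    unfolding orth_compl_def using cinner_eq_0_if_real_orthogonal[OF H] by blast
qed

lemma orthoproj_commute:
  fixes M H :: "'a::{complex_inner, complete_space} set"
  assumes M: "closed_csubspace M" and H: "closed_csubspace H"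
    and invariant: "orthoproj M ` H \<subseteq> H"
  shows "orthoproj M \<circ> orthoproj H = orthoproj H \<circ> orthoproj M"
proof
  fix x
  let ?P = "orthoproj M" and ?Q = "orthoproj H"
  have "inner z (?P x - ?P (?Q x)) = 0" if "z \<in> H" for z
  proof -
    have "?P z \<in> H" using invariant that by blast
    then have "inner (?P z) (x - ?Q x) = 0"
      using orthoproj_orthogonal[OF H] cinner_eq_0_iff by blast
    then show ?thesis by (simp add: inner_diff_right orthoproj_inner_commute[OF M])
  qed
  then have "?Q (?P x) = ?P (?Q x)"
  proof (intro orthoproj_unique cinner_eq_0_if_real_orthogonal[OF H])
    show "subspace H" using H by (simp add: closed_csubspace_def)
    show "?P (?Q x) \<in> H" using invariant orthoproj_in[OF H] by blast
  qed
  then show "(?P \<circ> ?Q) x = (?Q \<circ> ?P) x" by simp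
qed

lemma orthoproj_eq_orthoproj_Int:
  fixes M H :: "'a::{complex_inner, complete_space} set"
  assumes M: "closed_csubspace M" and H: "closed_csubspace H"
    and invariant: "orthoproj M ` H \<subseteq> H" and "x \<in> H"
  shows "orthoproj M x = orthoproj (M \<inter> H) x"
proof (rule sym, rule orthoproj_unique)
  show "subspace (M \<inter> H)" using M H by (simp add: closed_csubspace_def subspace_inter)
  show "orthoproj M x \<in> M \<inter> H" using invariant \<open>x \<in> H\<close> orthoproj_in[OF M] by blast
qed (use orthoproj_orthogonal[OF M] in blast)

lemma is_projectionD:
  assumes "is_projection q"
  shows "bounded_linear q" "q (scaleC c x) = scaleC c (q x)"
    "cinner (q x) y = cinner x (q y)" "q (q x) = q x"
  using assms unfolding is_projection_def by (auto simp: fun_eq_iff)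

lemma closed_csubspace_range_projection:
  fixes q :: "'a::complex_inner \<Rightarrow> 'a"
  assumes "is_projection q"
  shows "closed_csubspace (range q)"
proof -
  interpret bounded_linear q using is_projectionD(1)[OF assms] .
  have range_q: "range q = {x. q x = x}"
    by (auto simp: is_projectionD(4)[OF assms]) (metis rangeI)
  show ?thesis unfolding range_q
    by (rule closed_csubspaceI)
      (auto simp: add zero is_projectionD(2)[OF assms]
        intro!: closed_Collect_eq continuous_on continuous_on_id)
qed

lemma op_prod_Nil [simp]: "op_prod [] = id"
  by (simp add: op_prod_def)

lemma op_prod_Cons [simp]: "op_prod (W # Ws) = W \<circ> op_prod Ws"
  by (simp add: op_prod_def)

lemma op_prod_append: "op_prod (Ws @ Vs) = op_prod Ws \<circ> op_prod Vs"
  by (induction Ws) (simp_all add: fun_eq_iff)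

lemma bounded_linear_op_prod:
  "(\<And>W. W \<in> set Ws \<Longrightarrow> bounded_linear W) \<Longrightarrow> bounded_linear (op_prod Ws)"
proof (induction Ws)
  case (Cons W Ws)
  have "bounded_linear W" using Cons.prems by simp
  moreover have "bounded_linear (op_prod Ws)" using Cons.prems by (intro Cons.IH) simp
  ultimately show ?case using bounded_linear_compose by (simp add: o_def)
qed (simp add: id_def bounded_linear_ident)

lemma op_prod_scaleC:
  "(\<And>W x. W \<in> set Ws \<Longrightarrow> W (scaleC c x) = scaleC c (W x))
    \<Longrightarrow> op_prod Ws (scaleC c x) = scaleC c (op_prod Ws x)"
  by (induction Ws) auto

lemma cinner_op_prod_right:
  "(\<And>W x y. W \<in> set Ws \<Longrightarrow> cinner (W x) y = cinner x (W y))
    \<Longrightarrow> cinner x (op_prod Ws y) = cinner (op_prod (rev Ws) x) y"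
proof (induction Ws arbitrary: x)
  case (Cons W Ws)
  have "cinner x (W (op_prod Ws y)) = cinner (W x) (op_prod Ws y)"
    using Cons.prems[of W] by simp
  also have "\<dots> = cinner (op_prod (rev Ws) (W x)) y"
    using Cons.prems by (intro Cons.IH) simp
  finally show ?case by (simp add: op_prod_append)
qed simp

lemma op_prod_fixed_point: "(\<And>W. W \<in> set Ws \<Longrightarrow> W z = z) \<Longrightarrow> op_prod Ws z = z"
  by (induction Ws) auto

lemma H_pi_reorder:
  "\<phi> \<in> H_pi PI \<Longrightarrow> set Ws \<subseteq> PI \<Longrightarrow> set Vs \<subseteq> PI \<Longrightarrow> mset Ws = mset Vs
    \<Longrightarrow> op_prod Ws \<phi> = op_prod Vs \<phi>"
  unfolding H_pi_def commutes_on_def by blast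

lemma H_pi_op_prod:
  assumes "\<phi> \<in> H_pi PI" "set Us \<subseteq> PI"
  shows "op_prod Us \<phi> \<in> H_pi PI"
  unfolding H_pi_def commutes_on_def
proof (intro CollectI allI impI, elim conjE)
  fix Ws Vs assume "set Ws \<subseteq> PI" "set Vs \<subseteq> PI" "mset Ws = mset Vs"
  then have "op_prod (Ws @ Us) \<phi> = op_prod (Vs @ Us) \<phi>"
    using assms by (intro H_pi_reorder) auto
  then show "op_prod Ws (op_prod Us \<phi>) = op_prod Vs (op_prod Us \<phi>)"
    by (simp add: op_prod_append)
qed

lemma closed_csubspace_H_pi:
  fixes PI :: "('a::complex_inner \<Rightarrow> 'a) set"
  assumes "\<And>W. W \<in> PI \<Longrightarrow> is_projection W"
  shows "closed_csubspace (H_pi PI)"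
proof -
  define pairs where "pairs = {(Ws, Vs). set Ws \<subseteq> PI \<and> set Vs \<subseteq> PI \<and> mset Ws = mset Vs}"
  have H_pi_eq: "H_pi PI = (\<Inter>(Ws, Vs)\<in>pairs. {\<phi>. op_prod Ws \<phi> = op_prod Vs \<phi>})"
    unfolding H_pi_def commutes_on_def pairs_def by blast
  have linear: "bounded_linear (op_prod Ws)" if "set Ws \<subseteq> PI" for Ws
    using is_projectionD(1) assms that by (intro bounded_linear_op_prod) blast
  have scaleC: "op_prod Ws (scaleC c x) = scaleC c (op_prod Ws x)" if "set Ws \<subseteq> PI" for Ws c x
    using is_projectionD(2) assms that by (intro op_prod_scaleC) blast
  have "closed_csubspace {\<phi>. op_prod Ws \<phi> = op_prod Vs \<phi>}" if "(Ws, Vs) \<in> pairs" for Ws Vs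
  proof -
    interpret W: bounded_linear "op_prod Ws" using linear that pairs_def by blast
    interpret V: bounded_linear "op_prod Vs" using linear that pairs_def by blast
    show ?thesis
      using that unfolding pairs_def
      by (intro closed_csubspaceI closed_Collect_eq W.continuous_on V.continuous_on
          continuous_on_id)
        (auto simp: W.add V.add scaleC)
  qed
  then show ?thesis unfolding H_pi_eq by (auto intro: closed_csubspace_INT)
qed

lemma op_prod_in_range_on_H_pi:
  assumes "\<phi> \<in> H_pi PI" "set Ws \<subseteq> PI" "q \<in> set Ws" "\<And>x. q (q x) = q x"
  shows "op_prod Ws \<phi> \<in> range q"
proof -
  let ?Rs = "remove1 q Ws"
  have "q \<in> PI" "set ?Rs \<subseteq> PI"
    using assms(2,3) set_remove1_subset[of q Ws] by auto
  then have "op_prod Ws \<phi> = q (op_prod ?Rs \<phi>)"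
    using H_pi_reorder[OF assms(1,2), of "q # ?Rs"] assms(3) by simp
  then show ?thesis by blast
qed

lemma orthoproj_INT_range_eq_op_prod:
  fixes PI :: "('a::{complex_inner, complete_space} \<Rightarrow> 'a) set"
  assumes projections: "\<And>W. W \<in> PI \<Longrightarrow> is_projection W"
    and "\<phi> \<in> H_pi PI" and Ws: "set Ws \<subseteq> PI"
  shows "orthoproj (\<Inter>q\<in>set Ws. range q) \<phi> = op_prod Ws \<phi>"
proof (rule orthoproj_unique)
  let ?M = "\<Inter>q\<in>set Ws. range q"
  have is_proj: "is_projection q" if "q \<in> set Ws" for q using that Ws projections by blast
  show "subspace ?M"
    using closed_csubspace_INT[of "set Ws" range] closed_csubspace_range_projection[OF is_proj]
    by (simp add: closed_csubspace_def)
  show "op_prod Ws \<phi> \<in> ?M"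
  proof
    fix q assume "q \<in> set Ws"
    with is_projectionD(4)[OF is_proj[OF this]] show "op_prod Ws \<phi> \<in> range q"
      by (intro op_prod_in_range_on_H_pi[OF assms(2) Ws])
  qed
  fix z assume z: "z \<in> ?M"
  have "W z = z" if "W \<in> set Ws" for W
  proof -
    from z that have "z \<in> range W" by blast
    then show ?thesis using is_projectionD(4)[OF is_proj[OF that]] by auto
  qed
  then have "op_prod (rev Ws) z = z" by (intro op_prod_fixed_point) simp
  moreover have "cinner z (op_prod Ws \<phi>) = cinner (op_prod (rev Ws) z) \<phi>"
    using is_projectionD(3)[OF is_proj] by (rule cinner_op_prod_right)
  ultimately show "cinner z (\<phi> - op_prod Ws \<phi>) = 0"
    by (simp add: cinner_def complex_eq_iff inner_diff_right)
qed

lemma is_projection_pi_family: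
  assumes "\<And>s b. s \<in> S \<Longrightarrow> b \<in> \<Gamma> s \<Longrightarrow> is_projection (p s b)" and "W \<in> pi_family S \<Gamma> p"
  shows "is_projection W"
  using assms unfolding pi_family_def by blast

lemma set_map_subset_pi_family:
  "(\<And>j. j \<in> set js \<Longrightarrow> t j \<in> S \<and> a j \<in> \<Gamma> (t j))
    \<Longrightarrow> set (map (\<lambda>j. p (t j) (a j)) js) \<subseteq> pi_family S \<Gamma> p"
  unfolding pi_family_def by auto

lemma meet_proj_eq_op_prod:
  fixes p :: "'t \<Rightarrow> 'b \<Rightarrow> 'h::{complex_inner, complete_space} \<Rightarrow> 'h"
  assumes proj: "\<And>s b. s \<in> S \<Longrightarrow> b \<in> \<Gamma> s \<Longrightarrow> is_projection (p s b)"
    and js: "\<And>j. j \<in> set js \<Longrightarrow> t j \<in> S \<and> a j \<in> \<Gamma> (t j)"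
    and \<phi>: "\<phi> \<in> H_pi (pi_family S \<Gamma> p)"
  shows "meet_proj p t a (set js) \<phi> = op_prod (map (\<lambda>j. p (t j) (a j)) js) \<phi>"
  using orthoproj_INT_range_eq_op_prod[OF is_projection_pi_family[OF proj] \<phi>
      set_map_subset_pi_family[where p = p and t = t and a = a, OF js]]
  by (simp add: meet_proj_def image_image)

lemma meet_proj_image_H_pi:
  fixes p :: "'t \<Rightarrow> 'b \<Rightarrow> 'h::{complex_inner, complete_space} \<Rightarrow> 'h"
  assumes proj: "\<And>s b. s \<in> S \<Longrightarrow> b \<in> \<Gamma> s \<Longrightarrow> is_projection (p s b)"
    and js: "\<And>j. j \<in> set js \<Longrightarrow> t j \<in> S \<and> a j \<in> \<Gamma> (t j)"
  shows "meet_proj p t a (set js) ` H_pi (pi_family S \<Gamma> p) \<subseteq> H_pi (pi_family S \<Gamma> p)"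
proof clarify
  fix \<phi> assume \<phi>: "\<phi> \<in> H_pi (pi_family S \<Gamma> p)"
  have "meet_proj p t a (set js) \<phi> = op_prod (map (\<lambda>j. p (t j) (a j)) js) \<phi>"
    using proj js \<phi> by (rule meet_proj_eq_op_prod)
  also have "\<dots> \<in> H_pi (pi_family S \<Gamma> p)"
    using \<phi> set_map_subset_pi_family[where p = p and t = t and a = a, OF js] by (rule H_pi_op_prod)
  finally show "meet_proj p t a (set js) \<phi> \<in> H_pi (pi_family S \<Gamma> p)" .
qed

lemma meet_proj_has_sum:
  fixes p :: "'t \<Rightarrow> 'b \<Rightarrow> 'h::{complex_inner, complete_space} \<Rightarrow> 'h"
  assumes proj: "\<And>s b. s \<in> S \<Longrightarrow> b \<in> \<Gamma> s \<Longrightarrow> is_projection (p s b)"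
    and resolution: "\<And>s x. s \<in> S \<Longrightarrow> ((\<lambda>b. p s b x) has_sum x) (\<Gamma> s)"
    and "finite I" "i \<in> I" and ta: "\<And>j. j \<in> I \<Longrightarrow> t j \<in> S \<and> a j \<in> \<Gamma> (t j)"
    and \<phi>: "\<phi> \<in> H_pi (pi_family S \<Gamma> p)"
  shows "((\<lambda>b. meet_proj p t (a(i := b)) I \<phi>) has_sum meet_proj p t a (I - {i}) \<phi>) (\<Gamma> (t i))"
proof -
  obtain js where js: "set js = I - {i}" using finite_list[of "I - {i}"] \<open>finite I\<close> by auto
  have ta_js: "t j \<in> S \<and> a j \<in> \<Gamma> (t j)" if "j \<in> set js" for j using ta js that by auto
  define G where "G = op_prod (map (\<lambda>j. p (t j) (a j)) js)"
  have "bounded_linear G"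
    unfolding G_def
  proof (rule bounded_linear_op_prod)
    fix W assume "W \<in> set (map (\<lambda>j. p (t j) (a j)) js)"
    then obtain j where "j \<in> set js" "W = p (t j) (a j)" by auto
    with ta_js show "bounded_linear W" by (auto intro: is_projectionD(1)[OF proj])
  qed
  moreover have "t i \<in> S" using ta \<open>i \<in> I\<close> by blast
  ultimately have G_resolution: "((\<lambda>b. G (p (t i) b \<phi>)) has_sum G \<phi>) (\<Gamma> (t i))"
    by (rule has_sum_bounded_linear[OF _ resolution])
  have G_\<phi>: "meet_proj p t a (I - {i}) \<phi> = G \<phi>"
    unfolding G_def js[symmetric] by (rule meet_proj_eq_op_prod[OF proj ta_js \<phi>])
  have summand: "meet_proj p t (a(i := b)) I \<phi> = G (p (t i) b \<phi>)" if "b \<in> \<Gamma> (t i)" for b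
  proof -
    have I: "I = set (js @ [i])" using js \<open>i \<in> I\<close> by auto
    have "meet_proj p t (a(i := b)) I \<phi>
        = op_prod (map (\<lambda>j. p (t j) ((a(i := b)) j)) (js @ [i])) \<phi>"
      unfolding I
      by (rule meet_proj_eq_op_prod[OF proj _ \<phi>]) (use ta_js ta[OF \<open>i \<in> I\<close>] that in auto)
    also have "\<dots> = op_prod (map (\<lambda>j. p (t j) ((a(i := b)) j)) js) (p (t i) b \<phi>)"
      by (simp add: op_prod_append)
    also have "map (\<lambda>j. p (t j) ((a(i := b)) j)) js = map (\<lambda>j. p (t j) (a j)) js"
      using js by auto
    finally show ?thesis unfolding G_def .
  qed
  have "((\<lambda>b. meet_proj p t (a(i := b)) I \<phi>) has_sum G \<phi>) (\<Gamma> (t i))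
      \<longleftrightarrow> ((\<lambda>b. G (p (t i) b \<phi>)) has_sum G \<phi>) (\<Gamma> (t i))"
    by (rule has_sum_cong) (rule summand)
  with G_resolution show ?thesis unfolding G_\<phi> by simp
qed

theorem proposition2:
  fixes S :: "'t set" and \<Gamma> :: "'t \<Rightarrow> 'b set"
    and p :: "'t \<Rightarrow> 'b \<Rightarrow> 'h::{complex_inner, complete_space} \<Rightarrow> 'h"
    and k :: nat and t :: "nat \<Rightarrow> 't" and a :: "nat \<Rightarrow> 'b"
  assumes count: "\<And>s. s \<in> S \<Longrightarrow> countable (\<Gamma> s)"
    and proj: "\<And>s b. s \<in> S \<Longrightarrow> b \<in> \<Gamma> s \<Longrightarrow> is_projection (p s b)"
    and resolution: "\<And>s x. s \<in> S \<Longrightarrow> ((\<lambda>b. p s b x) has_sum x) (\<Gamma> s)"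
    and k: "1 \<le> k"
    and t: "\<And>i. i < k \<Longrightarrow> t i \<in> S"
    and a: "\<And>i. i < k \<Longrightarrow> a i \<in> \<Gamma> (t i)"
  defines "PI \<equiv> pi_family S \<Gamma> p"
  defines "P \<equiv> meet_proj p t a {..<k}"
  shows "(P ` H_pi PI \<subseteq> H_pi PI \<and> P ` orth_compl (H_pi PI) \<subseteq> orth_compl (H_pi PI))
    \<and> (P \<circ> orthoproj (H_pi PI) = orthoproj (H_pi PI) \<circ> P)
    \<and> (\<forall>\<phi>\<in>H_pi PI. P \<phi> = orthoproj ((\<Inter>i<k. range (p (t i) (a i))) \<inter> H_pi PI) \<phi>)
    \<and> (\<forall>\<phi>\<in>H_pi PI. P \<phi> = op_prod (map (\<lambda>i. p (t i) (a i)) [0..<k]) \<phi>)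
    \<and> (\<forall>\<phi>\<in>H_pi PI. \<forall>i<k.
           ((\<lambda>b. meet_proj p t (a(i := b)) {..<k} \<phi>) has_sum meet_proj p t a ({..<k} - {i}) \<phi>)
             (\<Gamma> (t i)))"
proof -
  let ?H = "H_pi PI" and ?M = "\<Inter>i<k. range (p (t i) (a i))"
  have H: "closed_csubspace ?H"
    using is_projection_pi_family[OF proj] unfolding PI_def by (rule closed_csubspace_H_pi)
  have M: "closed_csubspace ?M"
    using proj t a by (intro closed_csubspace_INT closed_csubspace_range_projection) auto
  have P_eq: "P = orthoproj ?M" unfolding P_def meet_proj_def ..
  have ta: "t i \<in> S \<and> a i \<in> \<Gamma> (t i)" if "i \<in> set [0..<k]" for i using t a that by auto
  have P_set: "P = meet_proj p t a (set [0..<k])" by (simp add: P_def atLeast0LessThan)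
  have product: "P \<phi> = op_prod (map (\<lambda>i. p (t i) (a i)) [0..<k]) \<phi>" if "\<phi> \<in> ?H" for \<phi>
    unfolding P_set using proj ta that unfolding PI_def by (rule meet_proj_eq_op_prod)
  have invariant: "orthoproj ?M ` ?H \<subseteq> ?H"
    unfolding P_eq[symmetric] P_set PI_def using proj ta by (rule meet_proj_image_H_pi)
  have summation: "((\<lambda>b. meet_proj p t (a(i := b)) {..<k} \<phi>)
      has_sum meet_proj p t a ({..<k} - {i}) \<phi>) (\<Gamma> (t i))" if "\<phi> \<in> ?H" "i < k" for \<phi> i
    by (rule meet_proj_has_sum[OF proj resolution finite_lessThan])
      (use that t a in \<open>auto simp: PI_def\<close>)
  show ?thesis
    using invariant orthoproj_orth_compl_invariant[OF M H invariant]
      orthoproj_commute[OF M H invariant]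
      orthoproj_eq_orthoproj_Int[OF M H invariant] product summation
    unfolding P_eq by blast
qed

end
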